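(* Let $G=(V_1,\ldots,V_p,E)$ be a finite $p$-partite graph viewed as a network in which each vertex is a node that can send messages to its neighbors, and let $k_1,\ldots,k_p$ be nonnegative integers. If every node runs the distributed peeling protocol described in the context with threshold $k(v)=k_i$ for $v\in V_i$, then once no messages remain in transit, the subgraph of $G$ induced by the nodes that are still active equals $G(k_1,\ldots,k_p)$.
   Context: A $p$-partite graph $G=(V_1,\ldots,V_p,E)$ has vertex set partitioned into disjoint sets $V_1,\ldots,V_p$ with no edges inside any $V_i$. $G(k_1,\ldots,k_p)$ denotes the largest subgraph of $G$ in which every vertex of $V_i$ has degree at least $k_i$ for every $i$ (unique, possibly empty). Distributed peeling protocol with thresholds $k(v)$: each node $v$ keeps a counter $degree$, initialized to $\deg_G(v)$, and a status, initially active. Initially, if $degree<k(v)$, node $v$ sends an "off" message to each of its neighbors and becomes inactive. An active node, upon receiving a message, sets $degree=degree-1$; if then $degree<k(v)$, it sends an "off" message to each of its neighbors and becomes inactive. An inactive node remains inactive and ignores all incoming messages. *)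

theory Defs
  imports Main "HOL-Library.Multiset"
begin

definition finite_graph :: "'a set \<Rightarrow> ('a \<times> 'a) set \<Rightarrow> bool" where
  "finite_graph V E \<longleftrightarrow> finite V \<and> E \<subseteq> V \<times> V \<and> sym E \<and> irrefl E"

(* p-partite: part assigns to each vertex its class index in {1..p};
   no edge joins two vertices of the same class. V_i = {v \<in> V. part v = i}. *)
definition p_partite :: "nat \<Rightarrow> 'a set \<Rightarrow> ('a \<times> 'a) set \<Rightarrow> ('a \<Rightarrow> nat) \<Rightarrow> bool" where
  "p_partite p V E part \<longleftrightarrow> finite_graph V E \<and> (\<forall>v\<in>V. part v \<in> {1..p})
     \<and> (\<forall>(u,v)\<in>E. part u \<noteq> part v)"

definition nbrs :: "('a \<times> 'a) set \<Rightarrow> 'a \<Rightarrow> 'a set" where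
  "nbrs E v = {u. (v,u) \<in> E}"

definition is_subgraph :: "'a set \<Rightarrow> ('a \<times> 'a) set \<Rightarrow> 'a set \<times> ('a \<times> 'a) set \<Rightarrow> bool" where
  "is_subgraph V E H \<longleftrightarrow> fst H \<subseteq> V \<and> snd H \<subseteq> E \<and> snd H \<subseteq> fst H \<times> fst H \<and> sym (snd H)"

definition deg_ok_subgraph ::
  "'a set \<Rightarrow> ('a \<times> 'a) set \<Rightarrow> ('a \<Rightarrow> nat) \<Rightarrow> (nat \<Rightarrow> nat) \<Rightarrow> 'a set \<times> ('a \<times> 'a) set \<Rightarrow> bool" where
  "deg_ok_subgraph V E part kk H \<longleftrightarrow> is_subgraph V E H \<and>
     (\<forall>v\<in>fst H. card (nbrs (snd H) v) \<ge> kk (part v))"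

definition subgraph_le :: "'a set \<times> ('a \<times> 'a) set \<Rightarrow> 'a set \<times> ('a \<times> 'a) set \<Rightarrow> bool" where
  "subgraph_le H H' \<longleftrightarrow> fst H \<subseteq> fst H' \<and> snd H \<subseteq> snd H'"

definition G_core ::
  "'a set \<Rightarrow> ('a \<times> 'a) set \<Rightarrow> ('a \<Rightarrow> nat) \<Rightarrow> (nat \<Rightarrow> nat) \<Rightarrow> 'a set \<times> ('a \<times> 'a) set" where
  "G_core V E part kk = (THE H. deg_ok_subgraph V E part kk H \<and>
      (\<forall>H'. deg_ok_subgraph V E part kk H' \<longrightarrow> subgraph_le H' H))"

definition induced :: "('a \<times> 'a) set \<Rightarrow> 'a set \<Rightarrow> 'a set \<times> ('a \<times> 'a) set" where
  "induced E S = (S, E \<inter> (S \<times> S))"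

(* Protocol state: per-node status (True = active), per-node degree counter,
   and the multiset of "off" messages in transit, each a pair (sender, receiver). *)
record 'a pstate =
  active :: "'a \<Rightarrow> bool"
  degc   :: "'a \<Rightarrow> int"
  transit :: "('a \<times> 'a) multiset"

definition off_msgs :: "'a set \<Rightarrow> ('a \<times> 'a) set \<Rightarrow> 'a \<Rightarrow> ('a \<times> 'a) multiset" where
  "off_msgs V E v = mset_set {(v,u) | u. u \<in> V \<and> (v,u) \<in> E}"

definition init_state :: "'a set \<Rightarrow> ('a \<times> 'a) set \<Rightarrow> ('a \<Rightarrow> nat) \<Rightarrow> 'a pstate" where
  "init_state V E k =
     \<lparr> active = (\<lambda>v. \<not> (int (card (nbrs E v)) < int (k v))),
       degc = (\<lambda>v. int (card (nbrs E v))),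
       transit = (\<Sum>v\<in>{v\<in>V. int (card (nbrs E v)) < int (k v)}. off_msgs V E v) \<rparr>"

definition deliver :: "'a set \<Rightarrow> ('a \<times> 'a) set \<Rightarrow> ('a \<Rightarrow> nat) \<Rightarrow> ('a \<times> 'a) \<Rightarrow> 'a pstate \<Rightarrow> 'a pstate" where
  "deliver V E k m s =
     (let w = snd m; s0 = s\<lparr>transit := transit s - {#m#}\<rparr> in
      if \<not> active s w then s0
      else let d = degc s w - 1 in
        if d < int (k w) then
          s0\<lparr>degc := (degc s)(w := d), active := (active s)(w := False),
             transit := transit s0 + off_msgs V E w\<rparr>
        else s0\<lparr>degc := (degc s)(w := d)\<rparr>)"

definition pstep :: "'a set \<Rightarrow> ('a \<times> 'a) set \<Rightarrow> ('a \<Rightarrow> nat) \<Rightarrow> 'a pstate \<Rightarrow> 'a pstate \<Rightarrow> bool" where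
  "pstep V E k s t \<longleftrightarrow> (\<exists>m. m \<in># transit s \<and> t = deliver V E k m s)"

definition reachable :: "'a set \<Rightarrow> ('a \<times> 'a) set \<Rightarrow> ('a \<Rightarrow> nat) \<Rightarrow> 'a pstate \<Rightarrow> bool" where
  "reachable V E k s \<longleftrightarrow> (pstep V E k)\<^sup>*\<^sup>* (init_state V E k) s"

end

theory Submission
  imports Defs
begin

text \<open>Every active node's counter equals the number of its active neighbours plus the number of
  "off" messages still addressed to it, and is at least its threshold. Once nothing is in transit,
  the active nodes therefore induce a subgraph satisfying the degree bounds. Conversely, a node of
  any subgraph H satisfying the bounds is never switched off: if v were the first node of H to
  become inactive, its counter before the decrement would be at least its number of active
  neighbours (which include its H-neighbours) plus the message being delivered, so it stays at or
  above the threshold. Hence the active part is the largest such subgraph.\<close>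

lemma finite_graph_finite_nbrs: "finite_graph V E \<Longrightarrow> finite (nbrs E v)"
  unfolding finite_graph_def nbrs_def by (rule finite_subset[of _ V]) auto

lemma finite_graph_edge_sym: "finite_graph V E \<Longrightarrow> (u, v) \<in> E \<longleftrightarrow> (v, u) \<in> E"
  unfolding finite_graph_def sym_def by blast

definition pending :: "'a pstate \<Rightarrow> 'a \<Rightarrow> nat" where
  "pending s v = count (image_mset snd (transit s)) v"

lemma pending_pos: "m \<in># transit s \<Longrightarrow> 1 \<le> pending s (snd m)"
  unfolding pending_def by (simp add: Suc_le_eq)

lemma count_off_msgs:
  assumes "finite_graph V E"
  shows "count (image_mset snd (off_msgs V E w)) v = (if (w, v) \<in> E then 1 else 0)"
proof -
  let ?M = "{(w, u) | u. u \<in> V \<and> (w, u) \<in> E}"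
  have inj: "inj_on snd ?M" by (auto simp: inj_on_def)
  have "snd ` ?M = {u. u \<in> V \<and> (w, u) \<in> E}" by force
  then have "image_mset snd (off_msgs V E w) = mset_set {u. u \<in> V \<and> (w, u) \<in> E}"
    unfolding off_msgs_def using image_mset_mset_set[OF inj] by simp
  moreover have "finite {u. u \<in> V \<and> (w, u) \<in> E}"
    using assms unfolding finite_graph_def by auto
  ultimately show ?thesis
    using assms unfolding finite_graph_def by auto
qed

lemma image_mset_sum: "image_mset f (\<Sum>x\<in>A. g x) = (\<Sum>x\<in>A. image_mset f (g x))"
  by (induction A rule: infinite_finite_induct) auto

lemma pending_init_state:
  assumes "finite_graph V E" and "v \<in> V"
  shows "pending (init_state V E k) v = card {u \<in> nbrs E v. card (nbrs E u) < k u}"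
proof -
  let ?I = "{u \<in> V. int (card (nbrs E u)) < int (k u)}"
  have "pending (init_state V E k) v = (\<Sum>u\<in>?I. if (u, v) \<in> E then 1 else 0)"
    by (simp add: pending_def init_state_def image_mset_sum count_sum count_off_msgs[OF assms(1)])
  also have "\<dots> = card {u \<in> ?I. (u, v) \<in> E}"
    using assms(1) unfolding finite_graph_def by (simp add: sum.If_cases Int_def conj_commute)
  also have "{u \<in> ?I. (u, v) \<in> E} = {u \<in> nbrs E v. card (nbrs E u) < k u}"
    using assms unfolding finite_graph_def nbrs_def sym_def by auto
  finally show ?thesis .
qed

lemma active_deliver:
  "active (deliver V E k m s) v \<longleftrightarrow> active s v \<and> \<not> (v = snd m \<and> degc s v - 1 < int (k v))"
  by (auto simp: deliver_def Let_def)

lemma degc_deliver: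
  "degc (deliver V E k m s) v = (if v = snd m \<and> active s v then degc s v - 1 else degc s v)"
  by (auto simp: deliver_def Let_def)

lemma pending_deliver:
  assumes "finite_graph V E" and "m \<in># transit s"
  shows "int (pending (deliver V E k m s) v) = int (pending s v) - (if v = snd m then 1 else 0)
    + (if active s (snd m) \<and> degc s (snd m) - 1 < int (k (snd m)) \<and> (snd m, v) \<in> E then 1 else 0)"
proof -
  have "transit (deliver V E k m s) = transit s - {#m#}
    + (if active s (snd m) \<and> degc s (snd m) - 1 < int (k (snd m)) then off_msgs V E (snd m) else {#})"
    by (auto simp: deliver_def Let_def)
  then show ?thesis
    using assms pending_pos[OF assms(2)]
    by (auto simp: pending_def image_mset_Diff count_off_msgs of_nat_diff)
qed

definition peeling_invariant :: "'a set \<Rightarrow> ('a \<times> 'a) set \<Rightarrow> ('a \<Rightarrow> nat) \<Rightarrow> 'a pstate \<Rightarrow> bool" where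
  "peeling_invariant V E k s \<longleftrightarrow> (\<forall>v. active s v \<longrightarrow> int (k v) \<le> degc s v) \<and>
     (\<forall>v\<in>V. active s v \<longrightarrow> degc s v = int (card {u \<in> nbrs E v. active s u}) + int (pending s v))"

lemma active_init_state: "active (init_state V E k) v \<longleftrightarrow> k v \<le> card (nbrs E v)"
  by (simp add: init_state_def not_less)

lemma degc_init_state: "degc (init_state V E k) v = int (card (nbrs E v))"
  by (simp add: init_state_def)

lemma peeling_invariant_init:
  assumes "finite_graph V E"
  shows "peeling_invariant V E k (init_state V E k)"
proof -
  have split: "card {u \<in> nbrs E v. k u \<le> card (nbrs E u)}
      + card {u \<in> nbrs E v. card (nbrs E u) < k u} = card (nbrs E v)" for v
    using finite_graph_finite_nbrs[OF assms, of v]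
    by (subst card_Un_disjoint[symmetric]) (auto intro: arg_cong[where f = card])
  show ?thesis
    unfolding peeling_invariant_def
    by (simp add: active_init_state degc_init_state pending_init_state[OF assms] split
        flip: of_nat_add)
qed

lemma peeling_invariant_deliver:
  assumes g: "finite_graph V E" and inv: "peeling_invariant V E k s" and m: "m \<in># transit s"
  shows "peeling_invariant V E k (deliver V E k m s)"
  unfolding peeling_invariant_def
proof (intro conjI allI ballI impI)
  let ?s' = "deliver V E k m s" and ?w = "snd m"
  let ?fires = "active s ?w \<and> degc s ?w - 1 < int (k ?w)"
  fix v
  assume "active ?s' v"
  then have act: "active s v" and not_fired: "\<not> (v = ?w \<and> degc s v - 1 < int (k v))"
    by (simp_all add: active_deliver)
  show "int (k v) \<le> degc ?s' v"
    using inv act not_fired unfolding peeling_invariant_def by (auto simp: degc_deliver)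
  assume "v \<in> V"
  let ?A = "{u \<in> nbrs E v. active s u}"
  have count_before: "degc s v = int (card ?A) + int (pending s v)"
    using inv act \<open>v \<in> V\<close> unfolding peeling_invariant_def by blast
  have active_nbrs': "{u \<in> nbrs E v. active ?s' u} = ?A - (if ?fires then {?w} else {})"
    by (auto simp: active_deliver)
  have "?fires \<Longrightarrow> ?w \<in> ?A \<longleftrightarrow> (?w, v) \<in> E"
    using finite_graph_edge_sym[OF g] by (auto simp: nbrs_def)
  moreover have "finite ?A"
    using finite_graph_finite_nbrs[OF g] by simp
  ultimately have "int (card ?A) = int (card {u \<in> nbrs E v. active ?s' u})
      + (if active s ?w \<and> degc s ?w - 1 < int (k ?w) \<and> (?w, v) \<in> E then 1 else 0)"
    unfolding active_nbrs' using card.remove[of ?A ?w] by auto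
  moreover have "degc ?s' v = degc s v - (if v = ?w then 1 else 0)"
    using act by (simp add: degc_deliver)
  ultimately show "degc ?s' v = int (card {u \<in> nbrs E v. active ?s' u}) + int (pending ?s' v)"
    using count_before pending_deliver[OF g m, of k v] by linarith
qed

lemma peeling_invariant_reachable:
  assumes "finite_graph V E" and "reachable V E k s"
  shows "peeling_invariant V E k s"
  using assms(2) unfolding reachable_def
proof (induction rule: rtranclp_induct)
  case base
  show ?case using peeling_invariant_init[OF assms(1)] .
next
  case (step s t)
  then show ?case using peeling_invariant_deliver[OF assms(1)] unfolding pstep_def by blast
qed

definition threshold_subgraph ::
  "'a set \<Rightarrow> ('a \<times> 'a) set \<Rightarrow> ('a \<Rightarrow> nat) \<Rightarrow> 'a set \<times> ('a \<times> 'a) set \<Rightarrow> bool" where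
  "threshold_subgraph V E k H \<longleftrightarrow> is_subgraph V E H \<and> (\<forall>v\<in>fst H. k v \<le> card (nbrs (snd H) v))"

lemma threshold_subgraph_le_active_nbrs:
  assumes "finite_graph V E" and "threshold_subgraph V E k H" and "v \<in> fst H"
    and "\<forall>u\<in>fst H. active s u"
  shows "k v \<le> card {u \<in> nbrs E v. active s u}"
proof -
  have "nbrs (snd H) v \<subseteq> {u \<in> nbrs E v. active s u}"
    using assms(2,4) unfolding threshold_subgraph_def is_subgraph_def nbrs_def by auto
  then have "card (nbrs (snd H) v) \<le> card {u \<in> nbrs E v. active s u}"
    using finite_graph_finite_nbrs[OF assms(1), of v] by (simp add: card_mono)
  then show ?thesis
    using assms(2,3) unfolding threshold_subgraph_def by fastforce
qed

lemma threshold_subgraph_stays_active: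
  assumes g: "finite_graph V E" and r: "reachable V E k s" and H: "threshold_subgraph V E k H"
  shows "\<forall>u\<in>fst H. active s u"
  using r unfolding reachable_def
proof (induction rule: rtranclp_induct)
  case base
  show ?case
  proof
    fix v assume "v \<in> fst H"
    have "nbrs (snd H) v \<subseteq> nbrs E v"
      using H unfolding threshold_subgraph_def is_subgraph_def nbrs_def by auto
    then have "card (nbrs (snd H) v) \<le> card (nbrs E v)"
      using finite_graph_finite_nbrs[OF g] card_mono by blast
    then show "active (init_state V E k) v"
      using H \<open>v \<in> fst H\<close> unfolding threshold_subgraph_def active_init_state by fastforce
  qed
next
  case (step s t)
  then obtain m where m: "m \<in># transit s" and t: "t = deliver V E k m s"
    unfolding pstep_def by blast
  have inv: "peeling_invariant V E k s"
    using peeling_invariant_reachable[OF g] step(1) unfolding reachable_def by blast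
  show ?case
  proof
    fix v assume v: "v \<in> fst H"
    then have "v \<in> V" "active s v"
      using H step.IH unfolding threshold_subgraph_def is_subgraph_def by auto
    then have "degc s v = int (card {u \<in> nbrs E v. active s u}) + int (pending s v)"
      using inv unfolding peeling_invariant_def by blast
    moreover have "k v \<le> card {u \<in> nbrs E v. active s u}"
      using threshold_subgraph_le_active_nbrs[OF g H v step.IH] .
    moreover have "v = snd m \<Longrightarrow> 1 \<le> pending s v"
      using pending_pos[OF m] by simp
    ultimately show "active t v"
      using \<open>active s v\<close> unfolding t active_deliver by fastforce
  qed
qed

lemma threshold_subgraph_induced_active:
  assumes g: "finite_graph V E" and r: "reachable V E k s" and "transit s = {#}"
  shows "threshold_subgraph V E k (induced E {v \<in> V. active s v})"
  unfolding threshold_subgraph_def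
proof (intro conjI ballI)
  let ?A = "{v \<in> V. active s v}"
  show "is_subgraph V E (induced E ?A)"
    using g unfolding is_subgraph_def induced_def finite_graph_def sym_def by auto
  fix v assume "v \<in> fst (induced E ?A)"
  then have v: "v \<in> V" "active s v" unfolding induced_def by auto
  have "nbrs (snd (induced E ?A)) v = {u \<in> nbrs E v. active s u}"
    using g v unfolding induced_def nbrs_def finite_graph_def by auto
  moreover have "pending s v = 0"
    using \<open>transit s = {#}\<close> unfolding pending_def by simp
  ultimately show "k v \<le> card (nbrs (snd (induced E ?A)) v)"
    using peeling_invariant_reachable[OF g r] v unfolding peeling_invariant_def by fastforce
qed

lemma G_core_eqI:
  assumes "deg_ok_subgraph V E part kk H"
    and "\<And>H'. deg_ok_subgraph V E part kk H' \<Longrightarrow> subgraph_le H' H"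
  shows "G_core V E part kk = H"
  unfolding G_core_def
proof (rule the_equality)
  fix H'' assume "deg_ok_subgraph V E part kk H'' \<and>
    (\<forall>H'. deg_ok_subgraph V E part kk H' \<longrightarrow> subgraph_le H' H'')"
  then have "subgraph_le H H''" "subgraph_le H'' H" using assms by blast+
  then show "H'' = H" unfolding subgraph_le_def by (auto intro: prod_eqI)
qed (use assms in blast)

theorem corollary4:
  fixes p :: nat and V :: "'a set" and E :: "('a \<times> 'a) set"
    and part :: "'a \<Rightarrow> nat" and kk :: "nat \<Rightarrow> nat" and s :: "'a pstate"
  assumes "p_partite p V E part"
    and "reachable V E (\<lambda>v. kk (part v)) s"
    and "transit s = {#}"
  shows "induced E {v \<in> V. active s v} = G_core V E part kk"
proof (rule G_core_eqI[symmetric])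
  have g: "finite_graph V E" using assms(1) unfolding p_partite_def by blast
  have deg_ok: "deg_ok_subgraph V E part kk = threshold_subgraph V E (\<lambda>v. kk (part v))"
    unfolding deg_ok_subgraph_def threshold_subgraph_def by blast
  show "deg_ok_subgraph V E part kk (induced E {v \<in> V. active s v})"
    unfolding deg_ok using threshold_subgraph_induced_active[OF g assms(2,3)] .
  fix H assume "deg_ok_subgraph V E part kk H"
  then have H: "threshold_subgraph V E (\<lambda>v. kk (part v)) H" unfolding deg_ok .
  then have "\<forall>u\<in>fst H. active s u" by (rule threshold_subgraph_stays_active[OF g assms(2)])
  with H show "subgraph_le H (induced E {v \<in> V. active s v})"
    unfolding threshold_subgraph_def is_subgraph_def subgraph_le_def induced_def by auto
qed

end
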